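(* Consider uplink two-user NOMA where user $U_k$ ($k=1,2$) at fixed distance $d_k>0$ from the base station transmits with SNR $\rho_k>0$, the channel gains are $X_k=|h_k|^2d_k^{-\alpha}$ with $\alpha>0$ and $h_1,h_2$ i.i.d. $\mathcal{CN}(0,1)$, and the sum rate is $R=\log_2(1+\rho_1X_1+\rho_2X_2)$. Let $\lambda_k=d_k^\alpha$ and assume $\frac{\lambda_1}{\rho_1}\neq\frac{\lambda_2}{\rho_2}$. Then $$\mathrm{E}\{R\}=\left[-\frac{\lambda_1}{\rho_1}\varphi'(2,\rho_2)+\frac{\lambda_2}{\rho_2}\varphi'(1,\rho_1)\right]\frac{1}{\frac{\lambda_2}{\rho_2}-\frac{\lambda_1}{\rho_1}},$$ where $\varphi'(k,\phi)=-\frac{1}{\ln2}e^{\lambda_k/\phi}\mathrm{Ei}(-\lambda_k/\phi)$ and $\mathrm{Ei}$ is the exponential integral. Moreover, in the high-SNR regime, for any fixed $\kappa>0$ with $\kappa\lambda_1\neq\lambda_2$, setting $\rho_2=\kappa\rho_1$, $$\lim_{\rho_1\to\infty}\left[\mathrm{E}\{R\}-\left(\left(\frac{\lambda_1}{\rho_1}\log_2\frac{\lambda_2}{\rho_2}-\frac{\lambda_2}{\rho_2}\log_2\frac{\lambda_1}{\rho_1}\right)\frac{1}{\frac{\lambda_2}{\rho_2}-\frac{\lambda_1}{\rho_1}}-\frac{C}{\ln2}\right)\right]=0,$$ where $C$ is the Euler–Mascheroni constant.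
   Context: The expectation is over the Rayleigh fading. $\mathrm{Ei}(x)=-\int_{-x}^{\infty}\frac{e^{-t}}{t}dt$ for $x<0$. *)

theory Defs
  imports "HOL-Probability.Probability"
begin

text \<open>Exponential integral for negative arguments:
  Ei x = - (integral over t from -x to infinity of exp(-t)/t), for x < 0.\<close>
definition Ei :: "real \<Rightarrow> real" where
  "Ei x = - (LBINT t:{-x..}. exp (- t) / t)"

text \<open>phi'(k, phi) of the paper, with lambda_k passed explicitly as lam.\<close>
definition phi' :: "real \<Rightarrow> real \<Rightarrow> real" where
  "phi' lam \<phi> = - (1 / ln 2) * exp (lam / \<phi>) * Ei (- lam / \<phi>)"

definition CN01_density :: "complex \<Rightarrow> ennreal" where
  "CN01_density z = ennreal (exp (- (cmod z)\<^sup>2) / pi)"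

end

(*
  With path loss folded in, the received powers rho_k |h_k|^2 d_k^(-alpha) are independent
  exponential variables with rates m_k = lambda_k / rho_k (|h|^2 of a CN(0,1) variable is Exp(1),
  by Fubini against the layer-cake form of its density), so their sum has the hypoexponential
  density m1 m2 (e^(-m1 x) - e^(-m2 x)) / (m2 - m1).  Against this density E log2(1 + S) reduces
  to the Laplace transform  int_0^oo e^(-m x) ln(1 + x) dx = e^m E1(m) / m  (integration by parts,
  then t = m (1 + u)), and phi' is e^m E1(m) / ln 2.

  For the high-SNR limit both rates tend to 0, and e^m E1(m) + ln m -> -gamma as m -> 0+:
  E1(m) + ln m is the integral over [m, oo) of the kernel (e^(-t) - [t <= 1]) / t, whose full
  integral is lim_(h->0+) (Gamma h - 1/h) = Gamma'(1) = -gamma, because int t^h kernel = Gamma h - 1/h.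
*)

theory Submission
  imports Defs "HOL-Real_Asymp.Real_Asymp"
begin

lemma nn_integral_exp_atLeast:
  fixes \<mu> c u :: real
  assumes "\<mu> > 0" "c \<ge> 0"
  shows "(\<integral>\<^sup>+x. ennreal (c * exp (- (\<mu> * x))) * indicator {u..} x \<partial>lborel)
         = ennreal (c * exp (- (\<mu> * u)) / \<mu>)"
proof -
  have "((\<lambda>x. - c * exp (- (\<mu> * x)) / \<mu>) \<longlongrightarrow> 0) at_top"
    using assms(1) by real_asymp
  then have "(\<integral>\<^sup>+x. ennreal (c * exp (- (\<mu> * x))) * indicator {u..} x \<partial>lborel)
             = 0 - (- c * exp (- (\<mu> * u)) / \<mu>)"
    by (intro nn_integral_FTC_atLeast)
       (use assms in \<open>auto intro!: derivative_eq_intros simp: field_simps\<close>)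
  then show ?thesis by simp
qed

(* No sign condition on a: for a < 0 both sides are 0, as ennreal truncates negative reals. *)
lemma emeasure_lborel_cmod_sq_le:
  "emeasure lborel {z::complex. (cmod z)\<^sup>2 \<le> a} = ennreal (pi * a)"
proof (cases "a \<ge> 0")
  case True
  have "{z::complex. (cmod z)\<^sup>2 \<le> a} = cball 0 (sqrt a)"
  proof safe
    fix z :: complex
    assume "z \<in> cball 0 (sqrt a)"
    then have "(cmod z)\<^sup>2 \<le> (sqrt a)\<^sup>2"
      by (intro power_mono) auto
    then show "(cmod z)\<^sup>2 \<le> a"
      using True by simp
  qed (auto intro: real_le_rsqrt)
  then show ?thesis
    using emeasure_cball[of "sqrt a" "0::complex"] True by (simp add: unit_ball_vol_2)
next
  case False
  have "\<not> (cmod z)\<^sup>2 \<le> a" for z :: complex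
    using False zero_le_power2[of "cmod z"] by linarith
  then have "{z::complex. (cmod z)\<^sup>2 \<le> a} = {}"
    by blast
  moreover have "pi * a \<le> 0"
    using False by (simp add: mult_nonneg_nonpos)
  ultimately show ?thesis
    by (simp add: ennreal_neg)
qed

lemma CN01_density_eq_nn_integral:
  "CN01_density z = (\<integral>\<^sup>+s. ennreal (exp (- s) / pi) * indicator {(cmod z)\<^sup>2..} s \<partial>lborel)"
  using nn_integral_exp_atLeast[of 1 "1 / pi" "(cmod z)\<^sup>2"] by (simp add: CN01_density_def)

lemma nn_integral_exp_min:
  assumes "a \<ge> 0"
  shows "(\<integral>\<^sup>+s. ennreal (exp (- s) * min s a) \<partial>lborel) = ennreal (1 - exp (- a))"
proof -
  have "(\<integral>\<^sup>+s. ennreal (exp (- s) * min s a) \<partial>lborel)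
      = (\<integral>\<^sup>+s. ennreal (s * exp (- s)) * indicator {0..a} s
                + ennreal (a * exp (- (1 * s))) * indicator {a..} s \<partial>lborel)"
    using AE_lborel_singleton[of a]
    by (intro nn_integral_cong_AE, eventually_elim)
       (auto split: split_indicator simp: ennreal_neg mult_nonpos_nonneg min_def mult.commute)
  also have "\<dots> = (\<integral>\<^sup>+s. ennreal (s * exp (- s)) * indicator {0..a} s \<partial>lborel)
                 + (\<integral>\<^sup>+s. ennreal (a * exp (- (1 * s))) * indicator {a..} s \<partial>lborel)"
    by (rule nn_integral_add) auto
  also have "(\<integral>\<^sup>+s. ennreal (s * exp (- s)) * indicator {0..a} s \<partial>lborel)
             = ennreal (- (a + 1) * exp (- a) - (- (0 + 1) * exp (- 0)))"
    by (rule nn_integral_FTC_Icc)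
       (use assms in \<open>auto intro!: derivative_eq_intros simp: algebra_simps\<close>)
  also have "(\<integral>\<^sup>+s. ennreal (a * exp (- (1 * s))) * indicator {a..} s \<partial>lborel)
             = ennreal (a * exp (- a))"
    using nn_integral_exp_atLeast[of 1 a a] assms by simp
  also have "ennreal (- (a + 1) * exp (- a) - (- (0 + 1) * exp (- 0))) + ennreal (a * exp (- a))
             = ennreal (1 - exp (- a))"
  proof -
    have "(1 + a) * exp (- a) \<le> 1"
      using exp_ge_add_one_self[of a] by (simp add: exp_minus field_simps)
    then show ?thesis
      using assms by (subst ennreal_plus[symmetric]) (auto simp: algebra_simps)
  qed
  finally show ?thesis .
qed

lemma nn_integral_CN01_density_cmod_sq_le:
  assumes "a \<ge> 0"
  shows "(\<integral>\<^sup>+z. CN01_density z * indicator {z. (cmod z)\<^sup>2 \<le> a} z \<partial>lborel) = ennreal (1 - exp (- a))"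
proof -
  have [measurable]: "Measurable.pred (borel \<Otimes>\<^sub>M borel) (\<lambda>x::real\<times>complex. fst x \<in> {(cmod (snd x))\<^sup>2..})"
    by simp
  have [measurable]: "{z::complex. (cmod z)\<^sup>2 \<le> a} \<in> sets borel"
    by measurable
  have "(\<integral>\<^sup>+z. CN01_density z * indicator {z. (cmod z)\<^sup>2 \<le> a} z \<partial>lborel)
      = (\<integral>\<^sup>+z. (\<integral>\<^sup>+s. ennreal (exp (- s) / pi) * indicator {(cmod z)\<^sup>2..} s
                 * indicator {z. (cmod z)\<^sup>2 \<le> a} z \<partial>lborel) \<partial>lborel)"
    by (simp add: CN01_density_eq_nn_integral nn_integral_multc)
  also have "\<dots> = (\<integral>\<^sup>+s. (\<integral>\<^sup>+z. ennreal (exp (- s) / pi) * indicator {(cmod z)\<^sup>2..} s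
                 * indicator {z. (cmod z)\<^sup>2 \<le> a} z \<partial>lborel) \<partial>lborel)"
    by (rule lborel_pair.Fubini') measurable
  also have "\<dots> = (\<integral>\<^sup>+s. ennreal (exp (- s) * min s a) \<partial>lborel)"
  proof (rule nn_integral_cong)
    fix s :: real
    have "(\<integral>\<^sup>+z. ennreal (exp (- s) / pi) * indicator {(cmod z)\<^sup>2..} s
             * indicator {z. (cmod z)\<^sup>2 \<le> a} z \<partial>lborel)
        = (\<integral>\<^sup>+z. ennreal (exp (- s) / pi) * indicator {z. (cmod z)\<^sup>2 \<le> min s a} z \<partial>lborel)"
      by (intro nn_integral_cong) (auto split: split_indicator)
    also have "\<dots> = ennreal (exp (- s) / pi) * ennreal (pi * min s a)"
      using emeasure_lborel_cmod_sq_le[of "min s a"] by (simp add: nn_integral_cmult_indicator)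
    also have "\<dots> = ennreal (exp (- s) * min s a)"
      by (simp add: ennreal_mult'[symmetric])
    finally show "(\<integral>\<^sup>+z. ennreal (exp (- s) / pi) * indicator {(cmod z)\<^sup>2..} s
             * indicator {z. (cmod z)\<^sup>2 \<le> a} z \<partial>lborel) = ennreal (exp (- s) * min s a)" .
  qed
  also have "\<dots> = ennreal (1 - exp (- a))"
    by (rule nn_integral_exp_min[OF assms])
  finally show ?thesis .
qed

lemma (in prob_space) CN01_cmod_sq_exponential:
  assumes h: "distributed M lborel h CN01_density"
  shows "distributed M lborel (\<lambda>\<omega>. (cmod (h \<omega>))\<^sup>2) (exponential_density 1)"
proof -
  have [measurable]: "h \<in> borel_measurable M"
    using distributed_measurable[OF h] by simp
  have "emeasure M {\<omega> \<in> space M. (cmod (h \<omega>))\<^sup>2 \<le> a} = ennreal (1 - exp (- a))" if "a \<ge> 0" for a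
  proof -
    have "emeasure M {\<omega> \<in> space M. (cmod (h \<omega>))\<^sup>2 \<le> a} = emeasure M (h -` {z. (cmod z)\<^sup>2 \<le> a} \<inter> space M)"
      by (rule arg_cong[where f="emeasure M"]) auto
    also have "\<dots> = ennreal (1 - exp (- a))"
      using nn_integral_CN01_density_cmod_sq_le[OF that] by (subst distributed_emeasure[OF h]) auto
    finally show ?thesis .
  qed
  then show ?thesis
    by (subst exponential_distributed_iff) (auto simp: measure_def)
qed

lemma (in prob_space) exponential_distributed_scaled:
  assumes X: "distributed M lborel X (exponential_density l)" and "l > 0" "c > 0"
  shows "distributed M lborel (\<lambda>\<omega>. c * X \<omega>) (exponential_density (l / c))"
proof -
  have [measurable]: "X \<in> borel_measurable M"
    using distributed_measurable[OF X] by simp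
  have "\<P>(\<omega> in M. c * X \<omega> \<le> a) = 1 - exp (- a * (l / c))" if "a \<ge> 0" for a
  proof -
    have "\<P>(\<omega> in M. c * X \<omega> \<le> a) = \<P>(\<omega> in M. X \<omega> \<le> a / c)"
      using \<open>c > 0\<close> by (simp add: field_simps)
    also have "\<dots> = 1 - exp (- a * (l / c))"
      using exponential_distributedD_le[OF X _ \<open>l > 0\<close>, of "a / c"] that \<open>c > 0\<close> by simp
    finally show ?thesis .
  qed
  then show ?thesis
    using assms by (subst exponential_distributed_iff) auto
qed

definition hypoexponential_density :: "real \<Rightarrow> real \<Rightarrow> real \<Rightarrow> real" where
  "hypoexponential_density m1 m2 x =
     (if x < 0 then 0 else m1 * m2 / (m2 - m1) * (exp (- (m1 * x)) - exp (- (m2 * x))))"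

lemma hypoexponential_density_nonneg:
  assumes "m1 \<ge> 0" "m2 \<ge> 0"
  shows "hypoexponential_density m1 m2 x \<ge> 0"
proof (cases "x < 0")
  case False
  have "0 \<le> (exp (- (m1 * x)) - exp (- (m2 * x))) / (m2 - m1)"
  proof (cases "m1 \<le> m2")
    case True
    then have "exp (- (m2 * x)) \<le> exp (- (m1 * x))"
      using False by (simp add: mult_right_mono)
    then show ?thesis
      using True by simp
  next
    case False': False
    then have "exp (- (m1 * x)) \<le> exp (- (m2 * x))"
      using False by (simp add: mult_right_mono)
    then show ?thesis
      using False' by (simp add: divide_nonpos_neg)
  qed
  then have "0 \<le> m1 * m2 * ((exp (- (m1 * x)) - exp (- (m2 * x))) / (m2 - m1))"
    using assms by (intro mult_nonneg_nonneg) auto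
  then show ?thesis
    using False by (simp add: hypoexponential_density_def)
qed (simp add: hypoexponential_density_def)

lemma convolution_exponential_density:
  assumes "m1 > 0" "m2 > 0" "m1 \<noteq> m2"
  shows "(\<integral>\<^sup>+y. ennreal (exponential_density m1 (x - y)) * ennreal (exponential_density m2 y) \<partial>lborel)
         = ennreal (hypoexponential_density m1 m2 x)"
proof (cases "x < 0")
  case True
  then have "(\<lambda>y. ennreal (exponential_density m1 (x - y)) * ennreal (exponential_density m2 y)) = (\<lambda>y. 0)"
    by (auto simp: exponential_density_def fun_eq_iff)
  then show ?thesis
    using True by (simp add: hypoexponential_density_def)
next
  case False
  define F where "F y = m1 * m2 * exp (- (x - y) * m1 - y * m2) / (m1 - m2)" for y
  have "(\<integral>\<^sup>+y. ennreal (exponential_density m1 (x - y)) * ennreal (exponential_density m2 y) \<partial>lborel)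
      = (\<integral>\<^sup>+y. ennreal (m1 * m2 * exp (- (x - y) * m1 - y * m2)) * indicator {0..x} y \<partial>lborel)"
    using assms
    by (intro nn_integral_cong)
       (auto simp: exponential_density_def ennreal_mult[symmetric] exp_add[symmetric] algebra_simps
             split: split_indicator)
  also have "\<dots> = F x - F 0"
  proof (rule nn_integral_FTC_Icc)
    fix y
    have "DERIV (\<lambda>y. exp (- (x - y) * m1 - y * m2)) y :> exp (- (x - y) * m1 - y * m2) * (m1 - m2)"
      by (auto intro!: derivative_eq_intros simp: algebra_simps)
    from DERIV_cdivide[OF DERIV_cmult[OF this, of "m1 * m2"], of "m1 - m2"]
    show "DERIV F y :> m1 * m2 * exp (- (x - y) * m1 - y * m2)"
      using assms by (simp add: F_def[abs_def] mult.assoc)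
  qed (use assms False in \<open>auto simp: F_def\<close>)
  also have "F x - F 0 = hypoexponential_density m1 m2 x"
    using assms False
    by (simp add: F_def hypoexponential_density_def mult.commute[of x] divide_simps)
       (simp add: algebra_simps)
  finally show ?thesis .
qed

lemma (in prob_space) sum_indep_exponential_distributed:
  assumes "m1 > 0" "m2 > 0" "m1 \<noteq> m2"
    and X: "distributed M lborel X (exponential_density m1)"
    and Y: "distributed M lborel Y (exponential_density m2)"
    and "indep_var borel X borel Y"
  shows "distributed M lborel (\<lambda>\<omega>. X \<omega> + Y \<omega>) (hypoexponential_density m1 m2)"
  using distributed_convolution[OF assms(6) X Y] convolution_exponential_density[OF assms(1-3)]
  by simp

definition E1 :: "real \<Rightarrow> real" where
  "E1 \<mu> = (LBINT t:{\<mu>..}. exp (- t) / t)"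

lemma phi'_eq_E1: "phi' l \<rho> = exp (l / \<rho>) * E1 (l / \<rho>) / ln 2"
  by (simp add: phi'_def Ei_def E1_def)

lemma set_integrable_E1:
  fixes \<mu> :: real
  assumes "\<mu> > 0"
  shows "set_integrable lborel {\<mu>..} (\<lambda>t. exp (- t) / t)"
proof -
  have "(\<integral>\<^sup>+t. ennreal (indicator {\<mu>..} t * (exp (- t) / t)) \<partial>lborel)
        \<le> (\<integral>\<^sup>+t. ennreal (1 / \<mu> * exp (- (1 * t))) * indicator {\<mu>..} t \<partial>lborel)"
    using assms
    by (intro nn_integral_mono) (auto split: split_indicator intro!: ennreal_leI divide_left_mono)
  also have "\<dots> = ennreal (1 / \<mu> * exp (- (1 * \<mu>)) / 1)"
    using assms by (intro nn_integral_exp_atLeast) auto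
  finally have "integrable lborel (\<lambda>t. indicator {\<mu>..} t * (exp (- t) / t))"
    using assms by (intro integrableI_nonneg) (auto simp: le_less_trans split: split_indicator)
  then show ?thesis
    by (simp add: set_integrable_def)
qed

lemma nn_integral_E1:
  fixes \<mu> :: real
  assumes "\<mu> > 0"
  shows "(\<integral>\<^sup>+t. ennreal (indicator {\<mu>..} t * (exp (- t) / t)) \<partial>lborel) = ennreal (E1 \<mu>)"
  using set_integrable_E1[OF assms] assms
  by (subst nn_integral_eq_integral)
     (auto simp: E1_def set_lebesgue_integral_def set_integrable_def split: split_indicator)

lemma E1_nonneg: "(\<mu> :: real) > 0 \<Longrightarrow> E1 \<mu> \<ge> 0"
  unfolding E1_def set_lebesgue_integral_def
  by (rule integral_nonneg_AE) (auto split: split_indicator)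

lemma ln_1_plus_eq_nn_integral:
  assumes "x \<ge> 0"
  shows "ennreal (ln (1 + x)) = (\<integral>\<^sup>+u. ennreal (1 / (1 + u)) * indicator {0..x} u \<partial>lborel)"
proof -
  have "(\<integral>\<^sup>+u. ennreal (1 / (1 + u)) * indicator {0..x} u \<partial>lborel) = ln (1 + x) - ln (1 + 0)"
    by (rule nn_integral_FTC_Icc)
       (use assms in \<open>auto intro!: derivative_eq_intros simp: field_simps\<close>)
  then show ?thesis
    by simp
qed

lemma nn_integral_exp_ln_1_plus_by_parts:
  assumes "\<mu> > 0"
  shows "(\<integral>\<^sup>+x. ennreal (exp (- (\<mu> * x)) * ln (1 + x)) * indicator {0..} x \<partial>lborel)
       = (\<integral>\<^sup>+u. ennreal (exp (- (\<mu> * u)) / (\<mu> * (1 + u))) * indicator {0..} u \<partial>lborel)"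
proof -
  have [measurable]: "Measurable.pred (borel \<Otimes>\<^sub>M borel) (\<lambda>p::real\<times>real. fst p \<in> {0..snd p})"
    "Measurable.pred (borel \<Otimes>\<^sub>M borel) (\<lambda>p::real\<times>real. snd p \<in> {0..fst p})"
    by simp_all
  have "(\<integral>\<^sup>+x. ennreal (exp (- (\<mu> * x)) * ln (1 + x)) * indicator {0..} x \<partial>lborel)
      = (\<integral>\<^sup>+x. (\<integral>\<^sup>+u. ennreal (exp (- (\<mu> * x)) / (1 + u)) * indicator {0..x} u \<partial>lborel) \<partial>lborel)"
  proof (rule nn_integral_cong)
    fix x :: real
    have "(\<integral>\<^sup>+u. ennreal (exp (- (\<mu> * x)) / (1 + u)) * indicator {0..x} u \<partial>lborel)
        = ennreal (exp (- (\<mu> * x))) * (\<integral>\<^sup>+u. ennreal (1 / (1 + u)) * indicator {0..x} u \<partial>lborel)"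
      by (subst nn_integral_cmult[symmetric])
         (auto intro!: nn_integral_cong simp: ennreal_mult[symmetric] split: split_indicator)
    then show "ennreal (exp (- (\<mu> * x)) * ln (1 + x)) * indicator {0..} x
        = (\<integral>\<^sup>+u. ennreal (exp (- (\<mu> * x)) / (1 + u)) * indicator {0..x} u \<partial>lborel)"
      by (cases "x \<ge> 0") (simp_all add: ln_1_plus_eq_nn_integral ennreal_mult)
  qed
  also have "\<dots> = (\<integral>\<^sup>+u. (\<integral>\<^sup>+x. ennreal (exp (- (\<mu> * x)) / (1 + u)) * indicator {0..x} u \<partial>lborel) \<partial>lborel)"
    by (rule lborel_pair.Fubini') measurable
  also have "\<dots> = (\<integral>\<^sup>+u. ennreal (exp (- (\<mu> * u)) / (\<mu> * (1 + u))) * indicator {0..} u \<partial>lborel)"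
  proof (rule nn_integral_cong)
    fix u :: real
    show "(\<integral>\<^sup>+x. ennreal (exp (- (\<mu> * x)) / (1 + u)) * indicator {0..x} u \<partial>lborel)
        = ennreal (exp (- (\<mu> * u)) / (\<mu> * (1 + u))) * indicator {0..} u"
    proof (cases "u \<ge> 0")
      case True
      have "(\<integral>\<^sup>+x. ennreal (exp (- (\<mu> * x)) / (1 + u)) * indicator {0..x} u \<partial>lborel)
          = (\<integral>\<^sup>+x. ennreal (1 / (1 + u) * exp (- (\<mu> * x))) * indicator {u..} x \<partial>lborel)"
        using True by (intro nn_integral_cong) (auto split: split_indicator)
      also have "\<dots> = ennreal (1 / (1 + u) * exp (- (\<mu> * u)) / \<mu>)"
        using True assms by (intro nn_integral_exp_atLeast) auto
      finally show ?thesis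
        using True by (simp add: mult.commute)
    qed simp
  qed
  finally show ?thesis .
qed

lemma nn_integral_exp_div_1_plus:
  assumes "\<mu> > 0"
  shows "(\<integral>\<^sup>+u. ennreal (exp (- (\<mu> * u)) / (\<mu> * (1 + u))) * indicator {0..} u \<partial>lborel)
       = ennreal (exp \<mu> / \<mu> * E1 \<mu>)"
proof -
  have "(\<integral>\<^sup>+u. ennreal (exp (- (\<mu> * u)) / (\<mu> * (1 + u))) * indicator {0..} u \<partial>lborel)
      = ennreal (1 / \<mu>) * (\<integral>\<^sup>+t. ennreal (exp (- (\<mu> * (-1 + 1 / \<mu> * t))) / (\<mu> * (1 + (-1 + 1 / \<mu> * t))))
                                 * indicator {0..} (-1 + 1 / \<mu> * t) \<partial>lborel)"
    using assms by (subst nn_integral_real_affine[where c="1 / \<mu>" and t="-1"]) auto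
  also have "(\<integral>\<^sup>+t. ennreal (exp (- (\<mu> * (-1 + 1 / \<mu> * t))) / (\<mu> * (1 + (-1 + 1 / \<mu> * t))))
                     * indicator {0..} (-1 + 1 / \<mu> * t) \<partial>lborel)
      = (\<integral>\<^sup>+t. ennreal (exp \<mu>) * ennreal (indicator {\<mu>..} t * (exp (- t) / t)) \<partial>lborel)"
  proof (rule nn_integral_cong)
    fix t :: real
    show "ennreal (exp (- (\<mu> * (-1 + 1 / \<mu> * t))) / (\<mu> * (1 + (-1 + 1 / \<mu> * t))))
            * indicator {0..} (-1 + 1 / \<mu> * t)
          = ennreal (exp \<mu>) * ennreal (indicator {\<mu>..} t * (exp (- t) / t))"
    proof (cases "\<mu> \<le> t")
      case True
      have shift: "\<mu> * (-1 + 1 / \<mu> * t) = t - \<mu>" and scale: "\<mu> * (1 + (-1 + 1 / \<mu> * t)) = t"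
        using assms by (simp_all add: field_simps)
      have "0 \<le> -1 + 1 / \<mu> * t" "t > 0"
        using True assms by (simp_all add: field_simps)
      then show ?thesis
        unfolding shift scale using True by (simp add: exp_diff exp_minus ennreal_mult[symmetric] field_simps)
    next
      case False
      then have "\<not> 0 \<le> -1 + 1 / \<mu> * t"
        using assms by (simp add: field_simps)
      then show ?thesis
        using False by simp
    qed
  qed
  also have "\<dots> = ennreal (exp \<mu>) * (\<integral>\<^sup>+t. ennreal (indicator {\<mu>..} t * (exp (- t) / t)) \<partial>lborel)"
    by (rule nn_integral_cmult) measurable
  also have "\<dots> = ennreal (exp \<mu>) * ennreal (E1 \<mu>)"
    unfolding nn_integral_E1[OF assms] ..
  finally show ?thesis
    using assms E1_nonneg[OF assms] by (simp add: ennreal_mult[symmetric] mult.assoc)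
qed

lemma has_bochner_integral_exp_ln_1_plus:
  assumes "\<mu> > 0"
  shows "has_bochner_integral lborel (\<lambda>x. indicator {0..} x * (exp (- (\<mu> * x)) * ln (1 + x)))
           (exp \<mu> / \<mu> * E1 \<mu>)"
proof (rule has_bochner_integral_nn_integral)
  show "(\<integral>\<^sup>+x. ennreal (indicator {0..} x * (exp (- (\<mu> * x)) * ln (1 + x))) \<partial>lborel)
        = ennreal (exp \<mu> / \<mu> * E1 \<mu>)"
    using nn_integral_exp_ln_1_plus_by_parts[OF assms] nn_integral_exp_div_1_plus[OF assms]
    by (simp add: indicator_mult_ennreal[symmetric] mult.commute)
qed (use assms E1_nonneg[OF assms] in \<open>auto split: split_indicator\<close>)

definition ergodic_rate :: "real \<Rightarrow> real \<Rightarrow> real" where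
  "ergodic_rate m1 m2 = (m2 * exp m1 * E1 m1 - m1 * exp m2 * E1 m2) / ((m2 - m1) * ln 2)"

lemma (in prob_space) expectation_log2_sum_exponential:
  assumes "m1 > 0" "m2 > 0" "m1 \<noteq> m2"
    and "distributed M lborel X (exponential_density m1)"
    and "distributed M lborel Y (exponential_density m2)"
    and "indep_var borel X borel Y"
  shows "(\<integral>\<omega>. log 2 (1 + X \<omega> + Y \<omega>) \<partial>M) = ergodic_rate m1 m2"
proof -
  define c where "c = m1 * m2 / ((m2 - m1) * ln 2)"
  define f where "f m x = indicator {0..} x * (exp (- (m * x)) * ln (1 + x))" for m x :: real
  have "(\<integral>\<omega>. log 2 (1 + X \<omega> + Y \<omega>) \<partial>M) = (\<integral>x. hypoexponential_density m1 m2 x * log 2 (1 + x) \<partial>lborel)"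
    using distributed_integral[OF sum_indep_exponential_distributed[OF assms], of "\<lambda>x. log 2 (1 + x)"]
      hypoexponential_density_nonneg assms
    by (simp add: add.assoc less_imp_le)
  also have "\<dots> = (\<integral>x. c * (f m1 x - f m2 x) \<partial>lborel)"
    using assms
    by (intro Bochner_Integration.integral_cong)
       (auto simp: hypoexponential_density_def f_def c_def log_def field_simps split: split_indicator)
  also have "\<dots> = c * (exp m1 / m1 * E1 m1 - exp m2 / m2 * E1 m2)"
    unfolding f_def using assms
    by (intro has_bochner_integral_integral_eq has_bochner_integral_mult_right
          has_bochner_integral_diff has_bochner_integral_exp_ln_1_plus)
  also have "\<dots> = ergodic_rate m1 m2"
    using assms by (simp add: c_def ergodic_rate_def field_simps)
  finally show ?thesis .
qed

lemma (in prob_space) expectation_log2_CN01_sum: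
  assumes h1: "distributed M lborel h1 CN01_density" and h2: "distributed M lborel h2 CN01_density"
    and "indep_var borel h1 borel h2"
    and "g1 > 0" "g2 > 0" "\<rho>1 > 0" "\<rho>2 > 0" "1 / (\<rho>1 * g1) \<noteq> 1 / (\<rho>2 * g2)"
  shows "(\<integral>\<omega>. log 2 (1 + \<rho>1 * ((cmod (h1 \<omega>))\<^sup>2 * g1) + \<rho>2 * ((cmod (h2 \<omega>))\<^sup>2 * g2)) \<partial>M)
         = ergodic_rate (1 / (\<rho>1 * g1)) (1 / (\<rho>2 * g2))"
proof (rule expectation_log2_sum_exponential)
  show "distributed M lborel (\<lambda>\<omega>. \<rho>1 * ((cmod (h1 \<omega>))\<^sup>2 * g1)) (exponential_density (1 / (\<rho>1 * g1)))"
    using exponential_distributed_scaled[OF CN01_cmod_sq_exponential[OF h1], of "\<rho>1 * g1"] assms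
    by (simp add: ac_simps)
  show "distributed M lborel (\<lambda>\<omega>. \<rho>2 * ((cmod (h2 \<omega>))\<^sup>2 * g2)) (exponential_density (1 / (\<rho>2 * g2)))"
    using exponential_distributed_scaled[OF CN01_cmod_sq_exponential[OF h2], of "\<rho>2 * g2"] assms
    by (simp add: ac_simps)
  show "indep_var borel (\<lambda>\<omega>. \<rho>1 * ((cmod (h1 \<omega>))\<^sup>2 * g1)) borel (\<lambda>\<omega>. \<rho>2 * ((cmod (h2 \<omega>))\<^sup>2 * g2))"
    using indep_var_compose[OF assms(3), of "\<lambda>z. \<rho>1 * ((cmod z)\<^sup>2 * g1)" borel
        "\<lambda>z. \<rho>2 * ((cmod z)\<^sup>2 * g2)" borel]
    by (simp add: o_def)
qed (use assms in auto)

lemma ergodic_rate_eq_phi':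
  "ergodic_rate (l1 / \<rho>1) (l2 / \<rho>2)
   = (- (l1 / \<rho>1) * phi' l2 \<rho>2 + (l2 / \<rho>2) * phi' l1 \<rho>1) * (1 / (l2 / \<rho>2 - l1 / \<rho>1))"
proof -
  have "ergodic_rate m1 m2 = (- m1 * (exp m2 * E1 m2 / ln 2) + m2 * (exp m1 * E1 m1 / ln 2)) * (1 / (m2 - m1))"
    for m1 m2
    by (simp add: ergodic_rate_def divide_simps)
  then show ?thesis
    by (simp only: phi'_eq_E1)
qed

definition euler_kernel :: "real \<Rightarrow> real" where
  "euler_kernel t = (if t \<le> 0 then 0 else if t \<le> 1 then (exp (- t) - 1) / t else exp (- t) / t)"

lemma euler_kernel_measurable [measurable]: "euler_kernel \<in> borel_measurable borel"
  unfolding euler_kernel_def by measurable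

lemma integrable_exp_1_minus: "integrable lborel (\<lambda>t::real. indicator {0..} t * exp (1 - t))"
proof (rule integrableI_nonneg)
  have "(\<integral>\<^sup>+t. ennreal (indicator {0..} t * exp (1 - t)) \<partial>lborel)
        = (\<integral>\<^sup>+t. ennreal (exp 1 * exp (- (1 * t))) * indicator {0..} t \<partial>lborel)"
    by (intro nn_integral_cong) (simp add: exp_diff exp_minus field_simps split: split_indicator)
  also have "\<dots> = ennreal (exp 1 * exp (- (1 * 0)) / 1)"
    by (rule nn_integral_exp_atLeast) auto
  finally show "(\<integral>\<^sup>+t. ennreal (indicator {0..} t * exp (1 - t)) \<partial>lborel) < \<infinity>"
    by simp
qed auto

lemma abs_powr_euler_kernel_le:
  assumes "0 \<le> h" "h \<le> 1"
  shows "\<bar>t powr h * euler_kernel t\<bar> \<le> indicator {0..} t * exp (1 - t)"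
proof (cases "t \<le> 0")
  case True
  then show ?thesis
    by (simp add: euler_kernel_def)
next
  case False
  show ?thesis
  proof (cases "t \<le> 1")
    case True
    have "t powr h \<le> 1"
      using powr_mono2[of h t 1] False True assms by simp
    moreover have "\<bar>exp (- t) - 1\<bar> \<le> t"
      using exp_ge_add_one_self[of "- t"] False by simp
    then have "\<bar>euler_kernel t\<bar> \<le> 1"
      using False True by (simp add: euler_kernel_def abs_div)
    ultimately have "\<bar>t powr h * euler_kernel t\<bar> \<le> 1"
      by (simp add: abs_mult mult_le_one)
    also have "1 \<le> exp (1 - t)"
      using True by simp
    finally show ?thesis
      using False by simp
  next
    case gt1: False
    have "t powr h \<le> t"
      using gt1 assms powr_mono[of h 1 t] by simp
    then have "t powr h * (exp (- t) / t) \<le> t * (exp (- t) / t)"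
      by (rule mult_right_mono) (use gt1 in auto)
    then have "\<bar>t powr h * euler_kernel t\<bar> \<le> t * (exp (- t) / t)"
      using gt1 by (simp add: euler_kernel_def abs_mult)
    also have "\<dots> \<le> exp (1 - t)"
      using gt1 by simp
    finally show ?thesis
      using gt1 by simp
  qed
qed

lemma abs_euler_kernel_le: "\<bar>euler_kernel t\<bar> \<le> indicator {0..} t * exp (1 - t)"
  using abs_powr_euler_kernel_le[of 0 t] by (cases "t = 0") (auto simp: euler_kernel_def)

lemma integral_dominated_convergence_at_right_0:
  fixes s :: "real \<Rightarrow> 'a \<Rightarrow> 'b::{banach, second_countable_topology}"
  assumes "f \<in> borel_measurable M" "\<And>h. s h \<in> borel_measurable M" "integrable M w"
    and "AE x in M. ((\<lambda>h. s h x) \<longlongrightarrow> f x) (at_right 0)"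
    and "\<forall>\<^sub>F h in at_right 0. AE x in M. norm (s h x) \<le> w x"
  shows "((\<lambda>h. integral\<^sup>L M (s h)) \<longlongrightarrow> integral\<^sup>L M f) (at_right 0)"
  using assms(4,5) unfolding filterlim_at_right_to_top eventually_at_right_to_top
  by (intro integral_dominated_convergence_at_top[where w=w]) (use assms(1-3) in auto)

lemma Gamma_minus_inverse_eq_integral:
  assumes "0 < h" "h \<le> 1"
  shows "Gamma h - 1 / h = (\<integral>t. t powr h * euler_kernel t \<partial>lborel)"
proof -
  define f1 where "f1 t = indicator {0..} t * t powr (h - 1) / exp t" for t :: real
  define f2 where "f2 t = indicator {0..1} t * t powr (h - 1)" for t :: real
  have [measurable]: "f1 \<in> borel_measurable borel" "f2 \<in> borel_measurable borel"
    unfolding f1_def f2_def by measurable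
  have Gamma: "has_bochner_integral lborel f1 (Gamma h)"
    using Gamma_conv_nn_integral_real[OF assms(1)] assms
    by (intro has_bochner_integral_nn_integral)
       (auto simp: f1_def Gamma_real_pos less_imp_le split: split_indicator)
  have inverse: "has_bochner_integral lborel f2 (1 / h)"
    using nn_integral_has_integral_lebesgue[OF _ has_integral_powr_from_0[of "h - 1" 1]] assms
    by (intro has_bochner_integral_nn_integral) (auto simp: f2_def split: split_indicator)
  have "(\<lambda>t. t powr h * euler_kernel t) = (\<lambda>t. f1 t - f2 t)"
  proof
    fix t :: real
    show "t powr h * euler_kernel t = f1 t - f2 t"
    proof (cases "t > 0")
      case True
      then have powr_h: "t powr h = t * t powr (h - 1)"
        by (simp add: powr_mult_base)
      show ?thesis
        unfolding powr_h using True by (auto simp: f1_def f2_def euler_kernel_def exp_minus field_simps)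
    qed (cases "t = 0", auto simp: f1_def f2_def euler_kernel_def)
  qed
  then have "has_bochner_integral lborel (\<lambda>t. t powr h * euler_kernel t) (Gamma h - 1 / h)"
    using has_bochner_integral_diff[OF Gamma inverse] by simp
  then show ?thesis
    by (simp add: has_bochner_integral_integral_eq)
qed

lemma Gamma_minus_inverse_tendsto:
  "((\<lambda>h::real. Gamma h - 1 / h) \<longlongrightarrow> - euler_mascheroni) (at_right 0)"
proof -
  have "(Gamma has_field_derivative - euler_mascheroni) (at (1::real))"
    using has_field_derivative_Gamma[of 1] by simp
  then have "((\<lambda>h. (Gamma (1 + h) - Gamma 1) / h) \<longlongrightarrow> - euler_mascheroni) (at_right (0::real))"
    by (auto simp: DERIV_def intro: tendsto_mono[OF at_within_le_at])
  moreover have "\<forall>\<^sub>F h in at_right 0. (Gamma (1 + h) - Gamma 1) / h = Gamma h - 1 / (h::real)"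
  proof (rule eventually_at_rightI[of 0 1])
    fix h :: real
    assume "h \<in> {0<..<1}"
    then have "Gamma (h + 1) = h * Gamma h"
      by (intro Gamma_plus1) (auto dest: nonpos_Ints_nonpos)
    then show "(Gamma (1 + h) - Gamma 1) / h = Gamma h - 1 / h"
      using \<open>h \<in> {0<..<1}\<close> by (simp add: add.commute field_simps)
  qed simp
  ultimately show ?thesis
    by (rule Lim_transform_eventually)
qed

lemma integral_euler_kernel: "integral\<^sup>L lborel euler_kernel = - euler_mascheroni"
proof -
  have "((\<lambda>h. \<integral>t. t powr h * euler_kernel t \<partial>lborel) \<longlongrightarrow> integral\<^sup>L lborel euler_kernel) (at_right 0)"
  proof (rule integral_dominated_convergence_at_right_0[OF _ _ integrable_exp_1_minus])
    show "AE t in lborel. ((\<lambda>h. t powr h * euler_kernel t) \<longlongrightarrow> euler_kernel t) (at_right 0)"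
    proof (rule AE_I2)
      fix t :: real
      show "((\<lambda>h. t powr h * euler_kernel t) \<longlongrightarrow> euler_kernel t) (at_right 0)"
      proof (cases "t > 0")
        case True
        have "((\<lambda>h. t powr h * euler_kernel t) \<longlongrightarrow> t powr 0 * euler_kernel t) (at_right 0)"
          using True by (intro tendsto_intros) auto
        then show ?thesis
          using True by simp
      qed (simp add: euler_kernel_def)
    qed
    show "\<forall>\<^sub>F h in at_right 0. AE t in lborel. norm (t powr h * euler_kernel t) \<le> indicator {0..} t * exp (1 - t)"
      by (rule eventually_at_rightI[of 0 1]) (auto intro!: AE_I2 abs_powr_euler_kernel_le)
  qed auto
  moreover have "\<forall>\<^sub>F h in at_right 0. (\<integral>t. t powr h * euler_kernel t \<partial>lborel) = Gamma h - 1 / h"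
    by (rule eventually_at_rightI[of 0 1]) (auto simp: Gamma_minus_inverse_eq_integral)
  ultimately have "((\<lambda>h. Gamma h - 1 / h) \<longlongrightarrow> integral\<^sup>L lborel euler_kernel) (at_right 0)"
    by (rule Lim_transform_eventually)
  then show ?thesis
    using tendsto_unique[OF _ _ Gamma_minus_inverse_tendsto] by simp
qed

lemma E1_plus_ln_eq_integral:
  assumes "0 < \<mu>" "\<mu> \<le> 1"
  shows "E1 \<mu> + ln \<mu> = (\<integral>t. indicator {\<mu>..} t * euler_kernel t \<partial>lborel)"
proof -
  have E1: "has_bochner_integral lborel (\<lambda>t. indicator {\<mu>..} t * (exp (- t) / t)) (E1 \<mu>)"
    using set_integrable_E1[OF assms(1)]
    by (simp add: E1_def set_integrable_def set_lebesgue_integral_def has_bochner_integral_iff)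
  have ln: "has_bochner_integral lborel (\<lambda>t. 1 / t * indicator {\<mu>..1} t) (- ln \<mu>)"
  proof -
    have "(\<integral>\<^sup>+t. ennreal (1 / t * indicator {\<mu>..1} t) \<partial>lborel)
          = (\<integral>\<^sup>+t. ennreal (1 / t) * indicator {\<mu>..1} t \<partial>lborel)"
      by (intro nn_integral_cong) (simp split: split_indicator)
    also have "\<dots> = ennreal (ln 1 - ln \<mu>)"
      by (rule nn_integral_FTC_Icc) (use assms in \<open>auto intro!: derivative_eq_intros\<close>)
    finally have "(\<integral>\<^sup>+t. ennreal (1 / t * indicator {\<mu>..1} t) \<partial>lborel) = ennreal (- ln \<mu>)"
      by simp
    then show ?thesis
      using assms by (intro has_bochner_integral_nn_integral) (auto split: split_indicator)
  qed
  have "(\<lambda>t. indicator {\<mu>..} t * euler_kernel t)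
        = (\<lambda>t. indicator {\<mu>..} t * (exp (- t) / t) - 1 / t * indicator {\<mu>..1} t)"
    using assms by (auto simp: euler_kernel_def diff_divide_distrib split: split_indicator)
  then have "has_bochner_integral lborel (\<lambda>t. indicator {\<mu>..} t * euler_kernel t) (E1 \<mu> - - ln \<mu>)"
    using has_bochner_integral_diff[OF E1 ln] by simp
  then show ?thesis
    by (simp add: has_bochner_integral_integral_eq)
qed

lemma E1_plus_ln_tendsto: "((\<lambda>\<mu>. E1 \<mu> + ln \<mu>) \<longlongrightarrow> - euler_mascheroni) (at_right 0)"
proof -
  have "((\<lambda>\<mu>. \<integral>t. indicator {\<mu>..} t * euler_kernel t \<partial>lborel) \<longlongrightarrow> integral\<^sup>L lborel euler_kernel)
        (at_right 0)"
  proof (rule integral_dominated_convergence_at_right_0[OF _ _ integrable_exp_1_minus])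
    show "AE t in lborel. ((\<lambda>\<mu>. indicator {\<mu>..} t * euler_kernel t) \<longlongrightarrow> euler_kernel t) (at_right 0)"
    proof (rule AE_I2)
      fix t :: real
      show "((\<lambda>\<mu>. indicator {\<mu>..} t * euler_kernel t) \<longlongrightarrow> euler_kernel t) (at_right 0)"
      proof (cases "t > 0")
        case True
        have "\<forall>\<^sub>F \<mu> in at_right 0. indicator {\<mu>..} t * euler_kernel t = euler_kernel t"
          by (rule eventually_at_rightI[of 0 t]) (use True in auto)
        then show ?thesis
          by (rule tendsto_eventually)
      qed (simp add: euler_kernel_def)
    qed
    show "\<forall>\<^sub>F \<mu> in at_right 0. AE t in lborel.
            norm (indicator {\<mu>..} t * euler_kernel t) \<le> indicator {0..} t * exp (1 - t)"
    proof (intro always_eventually allI AE_I2)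
      fix \<mu> t :: real
      have "norm (indicator {\<mu>..} t * euler_kernel t) \<le> \<bar>euler_kernel t\<bar>"
        by (simp split: split_indicator)
      then show "norm (indicator {\<mu>..} t * euler_kernel t) \<le> indicator {0..} t * exp (1 - t)"
        using abs_euler_kernel_le by (rule order_trans)
    qed
  qed auto
  moreover have "\<forall>\<^sub>F \<mu> in at_right 0. (\<integral>t. indicator {\<mu>..} t * euler_kernel t \<partial>lborel) = E1 \<mu> + ln \<mu>"
    by (rule eventually_at_rightI[of 0 1]) (auto simp: E1_plus_ln_eq_integral)
  ultimately show ?thesis
    unfolding integral_euler_kernel by (rule Lim_transform_eventually)
qed

lemma exp_E1_plus_ln_tendsto:
  "((\<lambda>\<mu>. exp \<mu> * E1 \<mu> + ln \<mu>) \<longlongrightarrow> - euler_mascheroni) (at_right 0)"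
proof -
  have "((\<lambda>\<mu>::real. (exp \<mu> - 1) * ln \<mu>) \<longlongrightarrow> 0) (at_right 0)"
    by real_asymp
  moreover have "((\<lambda>\<mu>::real. exp \<mu>) \<longlongrightarrow> 1) (at_right 0)"
    by real_asymp
  ultimately have "((\<lambda>\<mu>. exp \<mu> * (E1 \<mu> + ln \<mu>) - (exp \<mu> - 1) * ln \<mu>)
                    \<longlongrightarrow> 1 * (- euler_mascheroni) - 0) (at_right 0)"
    by (intro tendsto_intros E1_plus_ln_tendsto)
  then show ?thesis
    by (simp add: algebra_simps)
qed

lemma ergodic_rate_minus_high_snr_approx:
  assumes "m1 \<noteq> m2"
  shows "ergodic_rate m1 m2
           - ((m1 * log 2 m2 - m2 * log 2 m1) * (1 / (m2 - m1)) - euler_mascheroni / ln 2)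
         = (m2 * (exp m1 * E1 m1 + ln m1 + euler_mascheroni)
             - m1 * (exp m2 * E1 m2 + ln m2 + euler_mascheroni)) / ((m2 - m1) * ln 2)"
  using assms by (simp add: ergodic_rate_def log_def divide_simps) (simp add: algebra_simps)

lemma ergodic_rate_high_snr:
  assumes "a1 > 0" "a2 > 0" "a1 \<noteq> a2"
  shows "((\<lambda>\<rho>. ergodic_rate (a1 / \<rho>) (a2 / \<rho>)
             - ((a1 / \<rho> * log 2 (a2 / \<rho>) - a2 / \<rho> * log 2 (a1 / \<rho>)) * (1 / (a2 / \<rho> - a1 / \<rho>))
                - euler_mascheroni / ln 2)) \<longlongrightarrow> 0) at_top"
proof -
  define B where "B \<mu> = exp \<mu> * E1 \<mu> + ln \<mu> + euler_mascheroni" for \<mu>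
  have eq: "ergodic_rate (a1 / \<rho>) (a2 / \<rho>)
             - ((a1 / \<rho> * log 2 (a2 / \<rho>) - a2 / \<rho> * log 2 (a1 / \<rho>)) * (1 / (a2 / \<rho> - a1 / \<rho>))
                - euler_mascheroni / ln 2)
            = (a2 * B (a1 / \<rho>) - a1 * B (a2 / \<rho>)) / ((a2 - a1) * ln 2)" (is "?lhs = _")
    if "\<rho> > 0" for \<rho>
  proof -
    have "a1 / \<rho> \<noteq> a2 / \<rho>"
      using that assms by (simp add: divide_cancel_right)
    then have "?lhs = (a2 / \<rho> * B (a1 / \<rho>) - a1 / \<rho> * B (a2 / \<rho>)) / ((a2 / \<rho> - a1 / \<rho>) * ln 2)"
      unfolding B_def by (rule ergodic_rate_minus_high_snr_approx)
    also have "\<dots> = (a2 * B (a1 / \<rho>) - a1 * B (a2 / \<rho>)) / ((a2 - a1) * ln 2)"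
      using that by (simp add: diff_divide_distrib[symmetric])
    finally show ?thesis .
  qed
  have "((\<lambda>\<rho>. B (a / \<rho>)) \<longlongrightarrow> 0) at_top" if "a > 0" for a
  proof -
    have "filterlim (\<lambda>\<rho>. a / \<rho>) (at_right 0) at_top"
      using that by real_asymp
    moreover have "(B \<longlongrightarrow> 0) (at_right 0)"
      using tendsto_add[OF exp_E1_plus_ln_tendsto tendsto_const[of euler_mascheroni]]
      by (simp add: B_def[abs_def])
    ultimately show ?thesis
      by (rule filterlim_compose[rotated])
  qed
  then have "((\<lambda>\<rho>. (a2 * B (a1 / \<rho>) - a1 * B (a2 / \<rho>)) / ((a2 - a1) * ln 2))
              \<longlongrightarrow> (a2 * 0 - a1 * 0) / ((a2 - a1) * ln 2)) at_top"
    using assms by (intro tendsto_intros) auto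
  then have lim: "((\<lambda>\<rho>. (a2 * B (a1 / \<rho>) - a1 * B (a2 / \<rho>)) / ((a2 - a1) * ln 2)) \<longlongrightarrow> 0) at_top"
    by simp
  show ?thesis
    by (rule Lim_transform_eventually[OF lim], rule eventually_mono[OF eventually_gt_at_top[of 0]],
        erule eq[THEN sym])
qed

theorem proposition3:
  fixes M :: "'a measure" and h1 h2 :: "'a \<Rightarrow> complex" and d1 d2 \<alpha> :: real
  assumes "prob_space M"
    and "distributed M lborel h1 CN01_density"
    and "distributed M lborel h2 CN01_density"
    and "prob_space.indep_var M borel h1 borel h2"
    and "d1 > 0" and "d2 > 0" and "\<alpha> > 0"
  defines "l1 \<equiv> d1 powr \<alpha>" and "l2 \<equiv> d2 powr \<alpha>"
    and "ER \<equiv> (\<lambda>\<rho>1 \<rho>2. \<integral>\<omega>. log 2 (1 + \<rho>1 * ((cmod (h1 \<omega>))\<^sup>2 * d1 powr (- \<alpha>))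
                                  + \<rho>2 * ((cmod (h2 \<omega>))\<^sup>2 * d2 powr (- \<alpha>))) \<partial>M)"
  shows "(\<forall>\<rho>1 \<rho>2. \<rho>1 > 0 \<and> \<rho>2 > 0 \<and> l1 / \<rho>1 \<noteq> l2 / \<rho>2 \<longrightarrow>
            ER \<rho>1 \<rho>2 = (- (l1 / \<rho>1) * phi' l2 \<rho>2 + (l2 / \<rho>2) * phi' l1 \<rho>1)
                         * (1 / (l2 / \<rho>2 - l1 / \<rho>1)))
       \<and> (\<forall>\<kappa>. \<kappa> > 0 \<and> \<kappa> * l1 \<noteq> l2 \<longrightarrow>
            ((\<lambda>\<rho>. ER \<rho> (\<kappa> * \<rho>)
                 - (((l1 / \<rho>) * log 2 (l2 / (\<kappa> * \<rho>)) - (l2 / (\<kappa> * \<rho>)) * log 2 (l1 / \<rho>))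
                      * (1 / (l2 / (\<kappa> * \<rho>) - l1 / \<rho>))
                    - euler_mascheroni / ln 2))
             \<longlongrightarrow> 0) at_top)"
proof -
  interpret prob_space M
    by (rule assms(1))
  have rate: "1 / (\<rho> * d powr - \<alpha>) = d powr \<alpha> / \<rho>" for \<rho> d
    by (simp add: powr_minus divide_inverse mult.commute)
  have ER_eq: "ER \<rho>1 \<rho>2 = ergodic_rate (l1 / \<rho>1) (l2 / \<rho>2)"
    if "\<rho>1 > 0" "\<rho>2 > 0" "l1 / \<rho>1 \<noteq> l2 / \<rho>2" for \<rho>1 \<rho>2
    using expectation_log2_CN01_sum[OF assms(2-4), of "d1 powr - \<alpha>" "d2 powr - \<alpha>" \<rho>1 \<rho>2, unfolded rate]
      that assms(5,6)
    unfolding ER_def l1_def l2_def by simp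
  show ?thesis
  proof (intro conjI allI impI)
    fix \<rho>1 \<rho>2 :: real
    assume "\<rho>1 > 0 \<and> \<rho>2 > 0 \<and> l1 / \<rho>1 \<noteq> l2 / \<rho>2"
    then show "ER \<rho>1 \<rho>2 = (- (l1 / \<rho>1) * phi' l2 \<rho>2 + (l2 / \<rho>2) * phi' l1 \<rho>1) * (1 / (l2 / \<rho>2 - l1 / \<rho>1))"
      by (simp add: ER_eq ergodic_rate_eq_phi')
  next
    fix \<kappa> :: real
    assume \<kappa>: "\<kappa> > 0 \<and> \<kappa> * l1 \<noteq> l2"
    then have "l1 > 0" "l2 / \<kappa> > 0" "l1 \<noteq> l2 / \<kappa>"
      using assms(5,6) by (auto simp: l1_def l2_def field_simps)
    have ER_eventually: "\<forall>\<^sub>F \<rho> in at_top. ER \<rho> (\<kappa> * \<rho>) = ergodic_rate (l1 / \<rho>) (l2 / (\<kappa> * \<rho>))"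
      using \<kappa> by (intro eventually_mono[OF eventually_gt_at_top[of 0]] ER_eq) (auto simp: field_simps)
    show "((\<lambda>\<rho>. ER \<rho> (\<kappa> * \<rho>)
                 - (((l1 / \<rho>) * log 2 (l2 / (\<kappa> * \<rho>)) - (l2 / (\<kappa> * \<rho>)) * log 2 (l1 / \<rho>))
                      * (1 / (l2 / (\<kappa> * \<rho>) - l1 / \<rho>))
                    - euler_mascheroni / ln 2))
             \<longlongrightarrow> 0) at_top"
      by (rule Lim_transform_eventually[OF ergodic_rate_high_snr[OF \<open>l1 > 0\<close> \<open>l2 / \<kappa> > 0\<close> \<open>l1 \<noteq> l2 / \<kappa>\<close>]],
          rule eventually_mono[OF ER_eventually]) simp
  qed
qed

end
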